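(* Let $K\subseteq R\,\mathbb{B}_1^n$, $R\in\mathbb{N}$, be a compact convex set and let $P=\{\mathbf{x}\in\mathbb{R}^n:\mathsf{A}\mathbf{x}\le\mathbf{b}\}$, $\mathsf{A}\in\mathbb{Z}^{m\times n}$, $\mathbf{b}\in\mathbb{Z}^m$, with $P\cap K=\emptyset$ (and all rows $\mathbf{a}_i$ of $\mathsf{A}$ nonzero). For each $i\in[m]$ let $(\mathbf{a}'_i,b'_i,k_i,\mathbf{a}_{i,1},b_{i,1},\gamma_{i,1},\dots,\mathbf{a}_{i,k_i},b_{i,k_i},\gamma_{i,k_i})$ be a valid substitution sequence of $\mathbf{a}_i\mathbf{x}\le b_i$ of precision $R$, $N:=10nR$, $M:=(10nR)^{n+2}$, and let $P'=\{\mathbf{x}\in\mathbb{R}^n:\mathsf{A}'\mathbf{x}\le\mathbf{b}'\}$ where $\mathsf{A}'$ has rows $\mathbf{a}'_1,\dots,\mathbf{a}'_m$ and $\mathbf{b}'=(b'_1,\dots,b'_m)$. Then there exists an ordered list $\mathcal{L}=(\mathbf{a}_{j_1,p_1},-\mathbf{a}_{j_1,p_1},\dots,\mathbf{a}_{j_l,p_l},-\mathbf{a}_{j_l,p_l})$ with $j_r\in[m]$ and $p_r\in[k_{j_r}-1]$ for $r\in[l]$, such that $\mathrm{CG}(K\cap P',\mathcal{L})=\emptyset$ and $|\mathcal{L}|=2l\le 2(n+1)$.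
   Context: $\mathbb{B}_1^n$ is the unit $\ell_1$ ball. Notation: $\mathsf{A}\mathbf{x}\le\mathbf{b}\Rightarrow_R\mathbf{c}\mathbf{x}\le d$ means $\{\mathbf{x}:\|\mathbf{x}\|_1\le R,\ \mathsf{A}\mathbf{x}\le\mathbf{b}\}\subseteq\{\mathbf{x}:\|\mathbf{x}\|_1\le R,\ \mathbf{c}\mathbf{x}\le d\}$ (similarly with $<$; systems may include equalities). A valid substitution sequence of an inequality $\mathbf{a}\mathbf{x}\le b$ ($\mathbf{a}\in\mathbb{Z}^n\setminus\{0\}$, $b\in\mathbb{Z}$) of precision $R,N,M\in\mathbb{N}$ is a list $(\mathbf{a}',b',k,\mathbf{a}_1,b_1,\gamma_1,\dots,\mathbf{a}_k,b_k,\gamma_k)$ with $k\in[n+1]$, $\mathbf{a}',\mathbf{a}_i\in\mathbb{Z}^n$, $b',b_i\in\mathbb{Z}$, $\gamma_i\in\mathbb{R}_+$, $\gamma_k=0$, such that: (1) $\|\mathbf{a}'\|_\infty\le N^nM^{n+1}$, $|b'|\le RN^nM^{n+1}$, and $\|\mathbf{a}_i\|_\infty\le 11nN^n$, $|b_i|\le R\|\mathbf{a}_i\|_\infty+1$ for all $i\in[k]$; (2) for each $l\in[k-1]$: $\mathbf{a}'\mathbf{x}\le b',\ \mathbf{a}_i\mathbf{x}=b_i\ \forall i\in[l-1]\ \Rightarrow_R\ \mathbf{a}_l\mathbf{x}<b_l+1$; (3) for each $l\in[k]$: $\mathbf{a}'\mathbf{x}\le b',\ \mathbf{a}_i\mathbf{x}=b_i\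 \forall i\in[l-1]\ \Rightarrow_R\ \mathbf{a}\mathbf{x}\le b+\gamma_l$; (4) for each $l\in[k-1]$: $\mathbf{a}_l\mathbf{x}\le b_l-1,\ \mathbf{a}_i\mathbf{x}=b_i\ \forall i\in[l-1]\ \Rightarrow_R\ \mathbf{a}\mathbf{x}\le b-n\gamma_l$. Support function $h_K(\mathbf{a})=\sup_{\mathbf{x}\in K}\mathbf{a}\mathbf{x}$ with $h_\emptyset\equiv-\infty$; for $\mathbf{a}\in\mathbb{Z}^n$, $\mathrm{CG}(K,\mathbf{a}):=K\cap\{\mathbf{x}:\mathbf{a}\mathbf{x}\le\lfloor h_K(\mathbf{a})\rfloor\}$; for a list, cuts are applied one by one from left to right: $\mathrm{CG}(K,(\mathbf{a}_1,\dots,\mathbf{a}_k)):=\mathrm{CG}(\mathrm{CG}(K,\mathbf{a}_1),(\mathbf{a}_2,\dots,\mathbf{a}_k))$, $\mathrm{CG}(K,\emptyset)=K$. *)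

theory Defs
  imports "HOL-Analysis.Analysis"
begin

definition idot :: "int ^ 'n \<Rightarrow> real ^ 'n \<Rightarrow> real" where
  "idot a x = (\<Sum>i\<in>UNIV. real_of_int (a $ i) * x $ i)"

definition l1norm :: "real ^ 'n \<Rightarrow> real" where
  "l1norm x = (\<Sum>i\<in>UNIV. \<bar>x $ i\<bar>)"

definition l1ball :: "real \<Rightarrow> (real ^ 'n) set" where
  "l1ball R = {x. l1norm x \<le> R}"

definition inorm :: "int ^ 'n \<Rightarrow> int" where
  "inorm a = Max (range (\<lambda>i. \<bar>a $ i\<bar>))"

text \<open>The entries are indexed 1..k;
  n = CARD('n). The implications "=>_R" are set inclusions inside the l1 ball of radius R.\<close>
definition valid_subst ::
  "int ^ 'n \<Rightarrow> int \<Rightarrow> nat \<Rightarrow> nat \<Rightarrow> nat \<Rightarrow>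
   int ^ 'n \<Rightarrow> int \<Rightarrow> nat \<Rightarrow> (nat \<Rightarrow> int ^ 'n) \<Rightarrow> (nat \<Rightarrow> int) \<Rightarrow> (nat \<Rightarrow> real) \<Rightarrow> bool"
  where
  "valid_subst a b R N M a' b' k as bs \<gamma> \<longleftrightarrow>
     (let n = CARD('n) in
      k \<in> {1..n+1} \<and>
      (\<forall>i\<in>{1..k}. \<gamma> i \<ge> 0) \<and> \<gamma> k = 0 \<and>
      inorm a' \<le> int (N ^ n * M ^ (n+1)) \<and>
      \<bar>b'\<bar> \<le> int (R * N ^ n * M ^ (n+1)) \<and>
      (\<forall>i\<in>{1..k}. inorm (as i) \<le> int (11 * n * N ^ n) \<and>
                   \<bar>bs i\<bar> \<le> int R * inorm (as i) + 1) \<and>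
      (\<forall>l\<in>{1..k-1}.
         {x \<in> l1ball (real R). idot a' x \<le> b' \<and> (\<forall>i\<in>{1..<l}. idot (as i) x = bs i)}
         \<subseteq> {x. idot (as l) x < bs l + 1}) \<and>
      (\<forall>l\<in>{1..k}.
         {x \<in> l1ball (real R). idot a' x \<le> b' \<and> (\<forall>i\<in>{1..<l}. idot (as i) x = bs i)}
         \<subseteq> {x. idot a x \<le> b + \<gamma> l}) \<and>
      (\<forall>l\<in>{1..k-1}.
         {x \<in> l1ball (real R). idot (as l) x \<le> bs l - 1 \<and> (\<forall>i\<in>{1..<l}. idot (as i) x = bs i)}
         \<subseteq> {x. idot a x \<le> b - real n * \<gamma> l}))"

text \<open>Support function with values in the extended reals (Sup of the empty set is -infinity).\<close>
definition supp :: "(real ^ 'n) set \<Rightarrow> int ^ 'n \<Rightarrow> ereal" where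
  "supp K a = (SUP x\<in>K. ereal (idot a x))"

text \<open>Chvatal-Gomory cut. For K empty the result is empty; if the support value is
  +infinity (unbounded K, not relevant here) no cut is applied.\<close>
definition CG :: "(real ^ 'n) set \<Rightarrow> int ^ 'n \<Rightarrow> (real ^ 'n) set" where
  "CG K a = (if supp K a = \<infinity> then K
             else {x \<in> K. idot a x \<le> real_of_int \<lfloor>real_of_ereal (supp K a)\<rfloor>})"

primrec CG_list :: "(real ^ 'n) set \<Rightarrow> (int ^ 'n) list \<Rightarrow> (real ^ 'n) set" where
  "CG_list K [] = K"
| "CG_list K (a # as) = CG_list (CG K a) as"

end

(*
  Take a nonempty compact convex Q inside K \<inter> P'. For every constraint a_i x \<le> b_i, look at the
  deepest level l of its substitution sequence whose preceding equations a_{i,j} x = b_{i,j} all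
  hold on Q. If for some i the form a_{i,l} stays in the open slab (b_{i,l} - 1, b_{i,l} + 1) on Q
  without being constant there, the Chvatal-Gomory cuts by a_{i,l} and -a_{i,l} squeeze Q onto the
  hyperplane a_{i,l} x = b_{i,l}, so its affine dimension drops. Otherwise each a_i x \<le> b_i is
  violated on Q by at most some \<gamma> and oversatisfied by n \<gamma> at some point of Q; averaging such points
  and applying Helly's theorem yields a point of Q \<inter> P \<subseteq> K \<inter> P, which is impossible. As the affine
  dimension of K \<inter> P' is at most n, at most n + 1 pairs of cuts empty it.
*)

theory Submission
  imports Defs
begin

definition vec_of_int :: "int ^ 'n \<Rightarrow> real ^ 'n" where
  "vec_of_int a = (\<chi> j. real_of_int (a $ j))"

lemma idot_eq_inner: "idot a x = vec_of_int a \<bullet> x"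
  by (simp add: idot_def vec_of_int_def inner_vec_def)

lemma idot_uminus: "idot (- a) x = - idot a x"
  by (simp add: idot_def sum_negf)

lemma continuous_on_idot: "continuous_on S (idot a)"
  unfolding idot_eq_inner[abs_def] by (intro continuous_intros)

lemma idot_halfspaces_eq_INT:
  "{x. \<forall>i\<in>I. idot (A i) x \<le> b i} = (\<Inter>i\<in>I. {x. vec_of_int (A i) \<bullet> x \<le> b i})"
  by (auto simp: idot_eq_inner)

lemma closed_idot_halfspaces: "closed {x. \<forall>i\<in>I. idot (A i) x \<le> b i}"
  unfolding idot_halfspaces_eq_INT by (intro closed_INT ballI closed_halfspace_le)

lemma convex_idot_halfspaces: "convex {x. \<forall>i\<in>I. idot (A i) x \<le> b i}"
  unfolding idot_halfspaces_eq_INT by (intro convex_INT ballI convex_halfspace_le)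

lemma CG_empty: "CG {} a = {}"
  by (simp add: CG_def supp_def)

lemma CG_eq_floor_max:
  assumes "x0 \<in> Q" and "\<forall>y\<in>Q. idot a y \<le> idot a x0"
  shows "CG Q a = {x \<in> Q. idot a x \<le> \<lfloor>idot a x0\<rfloor>}"
proof -
  have "supp Q a = ereal (idot a x0)"
    unfolding supp_def using assms
    by (intro antisym SUP_least SUP_upper2[OF assms(1)]) auto
  then show ?thesis by (simp add: CG_def)
qed

lemma CG_eq_Int_halfspace:
  assumes "compact Q"
  obtains c where "CG Q a = Q \<inter> {x. vec_of_int a \<bullet> x \<le> c}"
proof (cases "Q = {}")
  case True
  then show ?thesis using that by (simp add: CG_empty)
next
  case False
  then obtain x0 where "x0 \<in> Q" "\<forall>y\<in>Q. idot a y \<le> idot a x0"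
    using continuous_attains_sup[OF assms _ continuous_on_idot] by blast
  from CG_eq_floor_max[OF this] show ?thesis
    using that by (auto simp: idot_eq_inner)
qed

lemma compact_CG: "compact Q \<Longrightarrow> compact (CG Q a)"
  by (metis CG_eq_Int_halfspace closed_halfspace_le compact_Int_closed)

lemma convex_CG: "compact Q \<Longrightarrow> convex Q \<Longrightarrow> convex (CG Q a)"
  by (metis CG_eq_Int_halfspace convex_Int convex_halfspace_le)

lemma CG_subset: "compact Q \<Longrightarrow> CG Q a \<subseteq> Q"
  by (metis CG_eq_Int_halfspace inf_le1)

lemma idot_le_of_mem_CG:
  assumes "compact Q" and "\<forall>y\<in>Q. idot a y < real_of_int \<beta> + 1" and "x \<in> CG Q a"
  shows "idot a x \<le> \<beta>"
proof -
  have "Q \<noteq> {}" using assms(3) by (auto simp: CG_empty)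
  then obtain x0 where x0: "x0 \<in> Q" "\<forall>y\<in>Q. idot a y \<le> idot a x0"
    using continuous_attains_sup[OF assms(1) _ continuous_on_idot] by blast
  then have "\<lfloor>idot a x0\<rfloor> \<le> \<beta>"
    using assms(2) by (simp add: floor_le_iff)
  then show ?thesis using assms(3) by (auto simp: CG_eq_floor_max[OF x0])
qed

text \<open>The Chvatal-Gomory cuts by \<open>a\<close> and \<open>-a\<close> squeeze such a \<open>Q\<close> onto the hyperplane
  \<open>a x = \<beta>\<close>, which \<open>Q\<close> is not contained in.\<close>
definition flattening_cut :: "int ^ 'n \<Rightarrow> int \<Rightarrow> (real ^ 'n) set \<Rightarrow> bool" where
  "flattening_cut a \<beta> Q \<longleftrightarrow> (\<forall>x\<in>Q. \<bar>idot a x - \<beta>\<bar> < 1) \<and> (\<exists>x\<in>Q. idot a x \<noteq> \<beta>)"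

lemma aff_dim_less_of_subset_hyperplane:
  fixes Q :: "'a::euclidean_space set"
  assumes "S \<subseteq> Q \<inter> {x. c \<bullet> x = \<beta>}" and "q \<in> Q" and "c \<bullet> q \<noteq> \<beta>"
  shows "aff_dim S < aff_dim Q"
proof (rule aff_dim_psubset)
  have "affine hull S \<subseteq> {x. c \<bullet> x = \<beta>}"
    using assms(1) by (intro hull_minimal) (auto simp: affine_hyperplane)
  then have "q \<notin> affine hull S" using assms(3) by blast
  moreover have "q \<in> affine hull Q" using assms(2) by (simp add: hull_inc)
  moreover have "affine hull S \<subseteq> affine hull Q" using assms(1) by (simp add: hull_mono)
  ultimately show "affine hull S \<subset> affine hull Q" by blast
qed

lemma CG_flattening_cut_subset_hyperplane:
  assumes "compact Q" and "flattening_cut a \<beta> Q"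
  shows "CG (CG Q a) (- a) \<subseteq> Q \<inter> {x. idot a x = \<beta>}"
proof
  fix x assume x: "x \<in> CG (CG Q a) (- a)"
  have Q1: "compact (CG Q a)" "CG Q a \<subseteq> Q"
    using assms(1) by (simp_all add: compact_CG CG_subset)
  then have "x \<in> CG Q a" using x CG_subset by blast
  have below: "\<forall>y\<in>Q. idot a y < real_of_int \<beta> + 1"
    and "\<forall>y\<in>Q. idot (- a) y < real_of_int (- \<beta>) + 1"
    using assms(2) by (auto simp: flattening_cut_def idot_uminus abs_less_iff)
  then have above: "\<forall>y\<in>CG Q a. idot (- a) y < real_of_int (- \<beta>) + 1"
    using Q1(2) by blast
  have "idot a x \<le> \<beta>" by (rule idot_le_of_mem_CG[OF assms(1) below \<open>x \<in> CG Q a\<close>])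
  moreover have "idot (- a) x \<le> - \<beta>" by (rule idot_le_of_mem_CG[OF Q1(1) above x])
  ultimately show "x \<in> Q \<inter> {x. idot a x = \<beta>}"
    using \<open>x \<in> CG Q a\<close> Q1(2) by (auto simp: idot_uminus)
qed

lemma aff_dim_CG_flattening_cut_less:
  assumes "compact Q" and "flattening_cut a \<beta> Q"
  shows "aff_dim (CG (CG Q a) (- a)) < aff_dim Q"
proof -
  obtain q where "q \<in> Q" "vec_of_int a \<bullet> q \<noteq> \<beta>"
    using assms(2) by (auto simp: flattening_cut_def idot_eq_inner)
  moreover have "CG (CG Q a) (- a) \<subseteq> Q \<inter> {x. vec_of_int a \<bullet> x = \<beta>}"
    using CG_flattening_cut_subset_hyperplane[OF assms] by (simp add: idot_eq_inner)
  ultimately show ?thesis by (intro aff_dim_less_of_subset_hyperplane)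
qed

text \<open>The witness is the average giving weight \<open>1 / (n + 1)\<close> to each \<open>y i\<close> and the rest to \<open>y0\<close>:
  for constraint \<open>i\<close> this yields at most \<open>(\<beta> i - n \<gamma> i + n (\<beta> i + \<gamma> i)) / (n + 1) = \<beta> i\<close>.\<close>
lemma convex_average_in_halfspaces:
  fixes Q :: "'a::real_inner set"
  assumes "convex Q" and "finite J" and "card J \<le> n + 1" and "y0 \<in> Q"
    and y: "\<And>i. i \<in> J \<Longrightarrow> y i \<in> Q"
    and upper: "\<And>i x. i \<in> J \<Longrightarrow> x \<in> Q \<Longrightarrow> w i \<bullet> x \<le> \<beta> i + \<gamma> i"
    and deep: "\<And>i. i \<in> J \<Longrightarrow> w i \<bullet> y i \<le> \<beta> i - real n * \<gamma> i"
  shows "\<exists>z\<in>Q. \<forall>i\<in>J. w i \<bullet> z \<le> \<beta> i"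
proof (cases "J = {}")
  case True
  then show ?thesis using \<open>y0 \<in> Q\<close> by blast
next
  case False
  define c where "c = real (card J)"
  define t where "t = c / (real n + 1)"
  define z where "z = (1 - t) *\<^sub>R y0 + (1 / (real n + 1)) *\<^sub>R (\<Sum>j\<in>J. y j)"
  have "c > 0" using False assms(2) by (simp add: c_def card_gt_0_iff)
  have "real n + 1 \<noteq> 0" by linarith
  have t: "0 \<le> t" "t \<le> 1" using assms(3) by (auto simp: t_def c_def)
  have "(\<Sum>j\<in>J. (1 / c) *\<^sub>R y j) \<in> Q"
    using \<open>c > 0\<close> by (intro convex_sum assms y) (simp_all add: c_def)
  moreover have "z = (1 - t) *\<^sub>R y0 + t *\<^sub>R (\<Sum>j\<in>J. (1 / c) *\<^sub>R y j)"
    using \<open>c > 0\<close> by (simp add: z_def t_def scaleR_sum_right[symmetric])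
  ultimately have "z \<in> Q" using convexD[OF assms(1) \<open>y0 \<in> Q\<close>] t by simp
  moreover have "w i \<bullet> z \<le> \<beta> i" if "i \<in> J" for i
  proof -
    have "(\<Sum>j\<in>J - {i}. w i \<bullet> y j) \<le> real (card (J - {i})) * (\<beta> i + \<gamma> i)"
      using that y upper by (intro sum_bounded_above) auto
    also have "real (card (J - {i})) = c - 1"
      using that assms(2) \<open>c > 0\<close> by (simp add: c_def Suc_le_eq)
    finally have "(\<Sum>j\<in>J. w i \<bullet> y j) \<le> (\<beta> i - real n * \<gamma> i) + (c - 1) * (\<beta> i + \<gamma> i)"
      using that deep[OF that] assms(2) by (simp add: sum.remove)
    moreover have "(1 - t) * (w i \<bullet> y0) \<le> (1 - t) * (\<beta> i + \<gamma> i)"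
      using t that upper \<open>y0 \<in> Q\<close> by (intro mult_left_mono) auto
    ultimately have "w i \<bullet> z \<le> (1 - t) * (\<beta> i + \<gamma> i)
        + ((\<beta> i - real n * \<gamma> i) + (c - 1) * (\<beta> i + \<gamma> i)) / (real n + 1)"
      unfolding z_def inner_add_right inner_scaleR_right inner_sum_right
      by (intro add_mono) (simp_all add: divide_right_mono)
    also have "\<dots> = \<beta> i"
      using \<open>real n + 1 \<noteq> 0\<close> by (simp add: t_def divide_simps) (simp add: algebra_simps)
    finally show ?thesis .
  qed
  ultimately show ?thesis by blast
qed

lemma Helly_le:
  fixes \<F> :: "'a::euclidean_space set set"
  assumes "\<forall>S\<in>\<F>. convex S" and "\<And>T. T \<subseteq> \<F> \<Longrightarrow> card T \<le> DIM('a) + 1 \<Longrightarrow> \<Inter>T \<noteq> {}"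
  shows "\<Inter>\<F> \<noteq> {}"
proof (cases "card \<F> \<ge> DIM('a) + 1")
  case True
  show ?thesis by (rule Helly[OF True assms(1)]) (rule assms(2); simp)
next
  case False
  then show ?thesis using assms(2)[of \<F>] by simp
qed

text \<open>By Helly it suffices to satisfy \<open>DIM('a) + 1\<close> of the constraints at a time.\<close>
lemma halfspaces_feasible_if_nearly_feasible:
  fixes Q :: "'a::euclidean_space set"
  assumes "convex Q" and "Q \<noteq> {}" and "finite J"
    and upper: "\<And>i x. i \<in> J \<Longrightarrow> x \<in> Q \<Longrightarrow> w i \<bullet> x \<le> \<beta> i + \<gamma> i"
    and deep: "\<And>i. i \<in> J \<Longrightarrow> \<exists>y\<in>Q. w i \<bullet> y \<le> \<beta> i - real DIM('a) * \<gamma> i"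
  shows "\<exists>z\<in>Q. \<forall>i\<in>J. w i \<bullet> z \<le> \<beta> i"
proof (cases "J = {}")
  case True
  then show ?thesis using assms(2) by blast
next
  case False
  obtain y where y: "\<And>i. i \<in> J \<Longrightarrow> y i \<in> Q \<and> w i \<bullet> y i \<le> \<beta> i - real DIM('a) * \<gamma> i"
    using deep by metis
  obtain y0 where "y0 \<in> Q" using assms(2) by blast
  define S where "S i = Q \<inter> {x. w i \<bullet> x \<le> \<beta> i}" for i
  have "\<Inter>(S ` J) \<noteq> {}"
  proof (rule Helly_le)
    show "\<forall>T\<in>S ` J. convex T"
      using assms(1) by (auto simp: S_def intro!: convex_Int convex_halfspace_le)
    fix T assume T: "T \<subseteq> S ` J" "card T \<le> DIM('a) + 1"
    then obtain U where U: "U \<subseteq> J" "inj_on S U" "T = S ` U"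
      by (auto simp: subset_image_inj)
    then have "card U \<le> DIM('a) + 1" using T(2) by (simp add: card_image)
    then have "\<exists>z\<in>Q. \<forall>i\<in>U. w i \<bullet> z \<le> \<beta> i"
      using U(1) y upper
      by (intro convex_average_in_halfspaces[OF assms(1) finite_subset[OF U(1) assms(3)] _ \<open>y0 \<in> Q\<close>]) auto
    then show "\<Inter>T \<noteq> {}" using U(3) by (auto simp: S_def)
  qed
  then show ?thesis using False by (auto simp: S_def)
qed

lemma valid_substD:
  fixes a :: "int ^ 'n"
  assumes "valid_subst a b R N M a' b' k as bs \<gamma>"
  shows "k \<in> {1..CARD('n) + 1}" and "\<gamma> k = 0"
    and "\<And>l x. \<lbrakk>l \<in> {1..k - 1}; x \<in> l1ball (real R); idot a' x \<le> b';
            \<forall>i\<in>{1..<l}. idot (as i) x = bs i\<rbrakk> \<Longrightarrow> idot (as l) x < bs l + 1"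
    and "\<And>l x. \<lbrakk>l \<in> {1..k}; x \<in> l1ball (real R); idot a' x \<le> b';
            \<forall>i\<in>{1..<l}. idot (as i) x = bs i\<rbrakk> \<Longrightarrow> idot a x \<le> b + \<gamma> l"
    and "\<And>l x. \<lbrakk>l \<in> {1..k - 1}; x \<in> l1ball (real R); idot (as l) x \<le> bs l - 1;
            \<forall>i\<in>{1..<l}. idot (as i) x = bs i\<rbrakk> \<Longrightarrow> idot a x \<le> b - real CARD('n) * \<gamma> l"
  using assms unfolding valid_subst_def Let_def by blast+

text \<open>For the largest level \<open>l\<close> whose preceding equations all hold on \<open>Q\<close>, either \<open>as l\<close> flattens
  \<open>Q\<close>, or \<open>l = k\<close> (so \<open>\<gamma> l = 0\<close>), or some point of \<open>Q\<close> has \<open>as l x \<le> bs l - 1\<close>; in the last two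
  cases \<open>g = \<gamma> l\<close> works.\<close>
lemma valid_subst_flattening_cut_or_nearly_feasible:
  fixes a :: "int ^ 'n" and Q :: "(real ^ 'n) set"
  assumes valid: "valid_subst a b R N M a' b' k as bs \<gamma>"
    and "Q \<noteq> {}" and "Q \<subseteq> l1ball (real R)" and "\<forall>x\<in>Q. idot a' x \<le> b'"
  shows "(\<exists>l\<in>{1..k - 1}. flattening_cut (as l) (bs l) Q) \<or>
         (\<exists>g. (\<forall>x\<in>Q. idot a x \<le> b + g) \<and> (\<exists>y\<in>Q. idot a y \<le> b - real CARD('n) * g))"
proof -
  define E where "E l \<longleftrightarrow> (\<forall>x\<in>Q. \<forall>i\<in>{1..<l}. idot (as i) x = bs i)" for l
  define levels where "levels = {l \<in> {1..k}. E l}"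
  define l where "l = Max levels"
  have "finite levels" "1 \<in> levels"
    using valid_substD(1)[OF valid] by (auto simp: levels_def E_def)
  then have "l \<in> levels" and maximal: "\<And>l'. l' \<in> levels \<Longrightarrow> l' \<le> l"
    unfolding l_def by (auto intro: Max_in Max_ge)
  then have l: "l \<in> {1..k}" "E l" by (auto simp: levels_def)
  have upper: "\<forall>x\<in>Q. idot a x \<le> b + \<gamma> l"
    using valid_substD(4)[OF valid l(1)] l(2) assms(3,4) by (auto simp: E_def)
  show ?thesis
  proof (cases "l = k")
    case True
    then have "\<forall>x\<in>Q. idot a x \<le> b + \<gamma> l" "\<exists>y\<in>Q. idot a y \<le> b - real CARD('n) * \<gamma> l"
      using upper valid_substD(2)[OF valid] assms(2) by auto
    then show ?thesis by blast
  next
    case False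
    then have l': "l \<in> {1..k - 1}" using l(1) by auto
    have "l + 1 \<in> {1..k}" using l' by auto
    then have "\<not> E (l + 1)" using maximal[of "l + 1"] by (auto simp: levels_def)
    then obtain q where "q \<in> Q" "idot (as l) q \<noteq> bs l"
      using l(2) by (auto simp: E_def less_Suc_eq)
    moreover have "\<forall>x\<in>Q. idot (as l) x < bs l + 1"
      using valid_substD(3)[OF valid l'] l(2) assms(3,4) by (auto simp: E_def)
    ultimately show ?thesis
    proof (cases "\<forall>x\<in>Q. bs l - 1 < idot (as l) x")
      case True
      then have "flattening_cut (as l) (bs l) Q"
        using \<open>q \<in> Q\<close> \<open>idot (as l) q \<noteq> bs l\<close> \<open>\<forall>x\<in>Q. idot (as l) x < bs l + 1\<close>
        by (auto simp: flattening_cut_def abs_less_iff)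
      then show ?thesis using l' by blast
    next
      case False
      then obtain y where "y \<in> Q" "idot (as l) y \<le> bs l - 1" by auto
      then have "idot a y \<le> b - real CARD('n) * \<gamma> l"
        using valid_substD(5)[OF valid l'] l(2) assms(3) by (auto simp: E_def)
      then show ?thesis using upper \<open>y \<in> Q\<close> by blast
    qed
  qed
qed

lemma exists_flattening_cut:
  fixes Q :: "(real ^ 'n) set" and m :: nat
  assumes "convex Q" and "Q \<noteq> {}" and "Q \<subseteq> l1ball (real R)"
    and feasible': "\<forall>i\<in>{1..m}. \<forall>x\<in>Q. idot (A' i) x \<le> b' i"
    and infeasible: "{x. \<forall>i\<in>{1..m}. idot (A i) x \<le> b i} \<inter> Q = {}"
    and valid: "\<forall>i\<in>{1..m}. valid_subst (A i) (b i) R N M (A' i) (b' i) (k i) (as i) (bs i) (\<gamma> i)"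
  shows "\<exists>j\<in>{1..m}. \<exists>p\<in>{1..k j - 1}. flattening_cut (as j p) (bs j p) Q"
proof (rule ccontr)
  assume no_cut: "\<not> ?thesis"
  have "\<forall>i\<in>{1..m}. \<exists>g::real. (\<forall>x\<in>Q. idot (A i) x \<le> b i + g) \<and>
      (\<exists>y\<in>Q. idot (A i) y \<le> b i - real CARD('n) * g)"
  proof
    fix i assume i: "i \<in> {1..m}"
    have "(\<exists>l\<in>{1..k i - 1}. flattening_cut (as i l) (bs i l) Q) \<or>
        (\<exists>g::real. (\<forall>x\<in>Q. idot (A i) x \<le> b i + g) \<and> (\<exists>y\<in>Q. idot (A i) y \<le> b i - real CARD('n) * g))"
      by (rule valid_subst_flattening_cut_or_nearly_feasible[OF bspec[OF valid i] assms(2,3)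
            bspec[OF feasible' i]])
    then show "\<exists>g::real. (\<forall>x\<in>Q. idot (A i) x \<le> b i + g) \<and> (\<exists>y\<in>Q. idot (A i) y \<le> b i - real CARD('n) * g)"
      using no_cut i by blast
  qed
  from bchoice[OF this] obtain g :: "nat \<Rightarrow> real" where g: "\<forall>i\<in>{1..m}.
      (\<forall>x\<in>Q. idot (A i) x \<le> b i + g i) \<and> (\<exists>y\<in>Q. idot (A i) y \<le> b i - real CARD('n) * g i)"
    by blast
  have "\<exists>z\<in>Q. \<forall>i\<in>{1..m}. vec_of_int (A i) \<bullet> z \<le> b i"
  proof (rule halfspaces_feasible_if_nearly_feasible[OF assms(1,2) finite_atLeastAtMost,
        of _ _ "\<lambda>i. vec_of_int (A i)" "\<lambda>i. real_of_int (b i)" g])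
    fix i x assume "i \<in> {1..m}" "x \<in> Q"
    then show "vec_of_int (A i) \<bullet> x \<le> b i + g i" using g by (simp add: idot_eq_inner)
  next
    fix i assume "i \<in> {1..m}"
    then show "\<exists>y\<in>Q. vec_of_int (A i) \<bullet> y \<le> b i - real DIM(real ^ 'n) * g i"
      using g by (simp add: idot_eq_inner)
  qed
  then show False using infeasible by (auto simp: idot_eq_inner)
qed

text \<open>Each flattening pair of cuts lowers the affine dimension, which starts at most \<open>n\<close>
  and ends at \<open>-1\<close> for the empty set.\<close>
lemma CG_list_flattening_cuts_empty:
  fixes Q0 :: "(real ^ 'n) set" and f :: "'i \<Rightarrow> int ^ 'n"
  assumes "compact Q0" and "convex Q0"
    and cut: "\<And>Q. \<lbrakk>compact Q; convex Q; Q \<subseteq> Q0; Q \<noteq> {}\<rbrakk> \<Longrightarrow> \<exists>c\<in>C. \<exists>\<beta>. flattening_cut (f c) \<beta> Q"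
  shows "\<exists>L. set L \<subseteq> C \<and> length L \<le> CARD('n) + 1 \<and>
           CG_list Q0 (concat (map (\<lambda>c. [f c, - f c]) L)) = {}"
proof -
  have "\<exists>L. set L \<subseteq> C \<and> int (length L) \<le> aff_dim Q + 1 \<and>
          CG_list Q (concat (map (\<lambda>c. [f c, - f c]) L)) = {}"
    if "compact Q" "convex Q" "Q \<subseteq> Q0" for Q
    using that
  proof (induction "nat (aff_dim Q + 1)" arbitrary: Q rule: less_induct)
    case less
    show ?case
    proof (cases "Q = {}")
      case True
      then show ?thesis by (intro exI[of _ "[]"]) simp
    next
      case False
      then obtain c \<beta> where "c \<in> C" and flat: "flattening_cut (f c) \<beta> Q"
        using cut less.prems by blast
      define Q' where "Q' = CG (CG Q (f c)) (- f c)"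
      have "Q' \<subseteq> Q"
        using CG_subset[OF compact_CG[OF less.prems(1)]] CG_subset[OF less.prems(1)]
        unfolding Q'_def by blast
      then have Q': "compact Q'" "convex Q'" "Q' \<subseteq> Q0"
        using less.prems by (auto simp: Q'_def compact_CG convex_CG)
      have "aff_dim Q' < aff_dim Q"
        unfolding Q'_def by (rule aff_dim_CG_flattening_cut_less[OF less.prems(1) flat])
      moreover have "aff_dim Q' \<ge> -1" by (rule aff_dim_geq)
      ultimately obtain L where "set L \<subseteq> C" "int (length L) \<le> aff_dim Q' + 1"
          "CG_list Q' (concat (map (\<lambda>c. [f c, - f c]) L)) = {}"
        using less.hyps[OF _ Q'] by fastforce
      then show ?thesis
        using \<open>c \<in> C\<close> \<open>aff_dim Q' < aff_dim Q\<close>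
        by (intro exI[of _ "c # L"]) (auto simp: Q'_def)
    qed
  qed
  moreover have "aff_dim Q0 \<le> int CARD('n)"
    using aff_dim_le_DIM[of Q0] by simp
  ultimately show ?thesis using assms(1,2) by fastforce
qed

theorem theorem3p3:
  fixes K :: "(real ^ 'n) set" and R m :: nat
    and A :: "nat \<Rightarrow> int ^ 'n" and b :: "nat \<Rightarrow> int"
    and A' :: "nat \<Rightarrow> int ^ 'n" and b' :: "nat \<Rightarrow> int" and k :: "nat \<Rightarrow> nat"
    and as :: "nat \<Rightarrow> nat \<Rightarrow> int ^ 'n" and bs :: "nat \<Rightarrow> nat \<Rightarrow> int"
    and \<gamma> :: "nat \<Rightarrow> nat \<Rightarrow> real"
  defines "N \<equiv> 10 * CARD('n) * R"
    and "M \<equiv> (10 * CARD('n) * R) ^ (CARD('n) + 2)"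
  assumes "compact K" and "convex K" and "K \<subseteq> l1ball (real R)"
    and "\<forall>i\<in>{1..m}. A i \<noteq> 0"
    and "{x. \<forall>i\<in>{1..m}. idot (A i) x \<le> b i} \<inter> K = {}"
    and "\<forall>i\<in>{1..m}. valid_subst (A i) (b i) R N M (A' i) (b' i) (k i) (as i) (bs i) (\<gamma> i)"
  shows "\<exists>js ps :: nat list.
           length js = length ps \<and>
           (\<forall>r<length js. js ! r \<in> {1..m} \<and> ps ! r \<in> {1..k (js ! r) - 1}) \<and>
           CG_list (K \<inter> {x. \<forall>i\<in>{1..m}. idot (A' i) x \<le> b' i})
             (concat (map (\<lambda>(j, p). [as j p, - as j p]) (zip js ps))) = {} \<and>
           2 * length js \<le> 2 * (CARD('n) + 1)"
proof -
  define P' where "P' = {x. \<forall>i\<in>{1..m}. idot (A' i) x \<le> b' i}"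
  define C where "C = {(j, p). j \<in> {1..m} \<and> p \<in> {1..k j - 1}}"
  have Q0: "compact (K \<inter> P')" "convex (K \<inter> P')"
    unfolding P'_def
    by (intro compact_Int_closed assms(3) closed_idot_halfspaces,
        intro convex_Int assms(4) convex_idot_halfspaces)
  have cut: "\<exists>c\<in>C. \<exists>\<beta>. flattening_cut (case_prod as c) \<beta> Q"
    if Q: "compact Q" "convex Q" "Q \<subseteq> K \<inter> P'" "Q \<noteq> {}" for Q
  proof -
    have "Q \<subseteq> l1ball (real R)" "\<forall>i\<in>{1..m}. \<forall>x\<in>Q. idot (A' i) x \<le> b' i"
      "{x. \<forall>i\<in>{1..m}. idot (A i) x \<le> b i} \<inter> Q = {}"
      using Q(3) assms(5,7) by (auto simp: P'_def)
    then obtain j p where "j \<in> {1..m}" "p \<in> {1..k j - 1}" "flattening_cut (as j p) (bs j p) Q"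
      using exists_flattening_cut[OF Q(2,4) _ _ _ assms(8)] by blast
    then show ?thesis by (auto simp: C_def)
  qed
  obtain L where L: "set L \<subseteq> C" "length L \<le> CARD('n) + 1"
      "CG_list (K \<inter> P') (concat (map (\<lambda>c. [case_prod as c, - case_prod as c]) L)) = {}"
    using CG_list_flattening_cuts_empty[OF Q0 cut] by blast
  have "\<forall>r<length L. fst (L ! r) \<in> {1..m} \<and> snd (L ! r) \<in> {1..k (fst (L ! r)) - 1}"
    using L(1) nth_mem by (fastforce simp: C_def)
  then show ?thesis
    using L(2,3) unfolding P'_def
    by (intro exI[of _ "map snd L", THEN exI[of _ "map fst L"]]) (simp add: zip_map_fst_snd case_prod_beta')
qed

end
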